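(* Let $q=2^t$. Then $\dim(\ker\pi_{P_1}\cap C(P,L))=q+1$.
   Context: Let $q$ be a prime power and $V$ a $4$-dimensional vector space over $\mathbb{F}_q$ with a nonsingular alternating bilinear form and symplectic basis $e_0,e_1,e_2,e_3$ with $(e_0,e_3)=(e_1,e_2)=1$. $P$ is the set of $1$-dimensional subspaces of $V$ (points), $L$ the set of totally isotropic $2$-dimensional subspaces (lines). $p_0=\langle e_0\rangle$; $P_1$ is the set of points $(a:b:c:d)$ with $d\ne 0$ (the points not collinear with $p_0$). $\mathbb{F}_2[P]$ is the space of functions $P\to\mathbb{F}_2$, and $C(P,L)$ is the span of the characteristic functions $\chi_\ell$ of all lines $\ell\in L$. $\pi_{P_1}:\mathbb{F}_2[P]\to\mathbb{F}_2[P_1]$ is restriction of functions to $P_1$. *)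

theory Defs
  imports Complex_Main "HOL-Library.Z2" "HOL-Library.Function_Algebras"
begin

text \<open>V = F_q^4, vectors written as coordinate tuples (a,b,c,d) = a e0 + b e1 + c e2 + d e3.\<close>

type_synonym 'a vec4 = "'a \<times> 'a \<times> 'a \<times> 'a"

definition v4_add :: "'a::field vec4 \<Rightarrow> 'a vec4 \<Rightarrow> 'a vec4" where
  "v4_add u w = (case u of (a0,a1,a2,a3) \<Rightarrow> case w of (b0,b1,b2,b3) \<Rightarrow>
                   (a0+b0, a1+b1, a2+b2, a3+b3))"

definition v4_smult :: "'a::field \<Rightarrow> 'a vec4 \<Rightarrow> 'a vec4" where
  "v4_smult c u = (case u of (a0,a1,a2,a3) \<Rightarrow> (c*a0, c*a1, c*a2, c*a3))"

definition sform :: "'a::field vec4 \<Rightarrow> 'a vec4 \<Rightarrow> 'a" where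
  "sform u w = (case u of (a0,a1,a2,a3) \<Rightarrow> case w of (b0,b1,b2,b3) \<Rightarrow>
                  a0*b3 - a3*b0 + a1*b2 - a2*b1)"

definition span1 :: "'a::field vec4 \<Rightarrow> 'a vec4 set" where
  "span1 v = {v4_smult c v | c. True}"

definition span2 :: "'a::field vec4 \<Rightarrow> 'a vec4 \<Rightarrow> 'a vec4 set" where
  "span2 u w = {v4_add (v4_smult a u) (v4_smult b w) | a b. True}"

definition lin_indep2 :: "'a::field vec4 \<Rightarrow> 'a vec4 \<Rightarrow> bool" where
  "lin_indep2 u w = (\<forall>a b. v4_add (v4_smult a u) (v4_smult b w) = (0,0,0,0) \<longrightarrow> a = 0 \<and> b = 0)"

definition Points :: "'a::field vec4 set set" where
  "Points = {span1 v | v. v \<noteq> (0,0,0,0)}"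

definition Lines :: "'a::field vec4 set set" where
  "Lines = {W. \<exists>u w. lin_indep2 u w \<and> W = span2 u w \<and> (\<forall>x\<in>W. \<forall>y\<in>W. sform x y = 0)}"

definition Points1 :: "'a::field vec4 set set" where
  "Points1 = {p \<in> Points. \<exists>a b c d. d \<noteq> 0 \<and> p = span1 (a,b,c,d)}"

text \<open>F_2[P] is modelled as functions on point-sets with values in bit (= F_2);
  characteristic functions vanish outside P.\<close>
definition chi :: "'a::field vec4 set \<Rightarrow> 'a vec4 set \<Rightarrow> bit" where
  "chi l = (\<lambda>p. if p \<in> Points \<and> p \<subseteq> l then 1 else 0)"

definition fscale :: "bit \<Rightarrow> ('x \<Rightarrow> bit) \<Rightarrow> ('x \<Rightarrow> bit)" where
  "fscale c f = (\<lambda>x. c * f x)"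

definition code_PL :: "('a::field vec4 set \<Rightarrow> bit) set" where
  "code_PL = module.span fscale (chi ` (Lines :: 'a vec4 set set))"

definition ker_restr_P1 :: "('a::field vec4 set \<Rightarrow> bit) set" where
  "ker_restr_P1 = {f. \<forall>p \<in> (Points1 :: 'a vec4 set set). f p = 0}"

end

theory Submission
  imports Defs
begin

(* Let K be the kernel of the restriction to P1 inside C(P,L).  Its elements are the
   codewords supported on the points of the hyperplane p0^perp (the points with d = 0), i.e.
   on the q + 1 lines through p0.  We show that K is spanned by the characteristic functions of
   these q + 1 lines, which are linearly independent; hence dim K = q + 1.

   The tool is a family of parity checks.  If a set G of vectors meets every line in an even
   number of nonzero vectors, then the sum of f(<v>) over the nonzero v in G vanishes for every
   f in C(P,L); as q - 1 is odd in characteristic 2, this is a sum over the points of G.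
   Two kinds of G are used: the complement of the hyperplane e3^perp (the vectors with a <> 0),
   and U union U^perp for a nondegenerate plane U.  For f in K the second kind shows that f is constant on every line
   through p0 with p0 removed, and the first that f(p0) is the sum of these constants.
   Together this means that f is the corresponding combination of the line characteristic
   functions. *)

section \<open>Coordinates and the alternating form\<close>

lemma v4_add_simp [simp]: "v4_add (a0,a1,a2,a3) (b0,b1,b2,b3) = (a0+b0, a1+b1, a2+b2, a3+b3)"
  by (simp add: v4_add_def)

lemma v4_smult_simp [simp]: "v4_smult c (a0,a1,a2,a3) = (c*a0, c*a1, c*a2, c*a3)"
  by (simp add: v4_smult_def)

lemma sform_simp [simp]: "sform (a0,a1,a2,a3) (b0,b1,b2,b3) = a0*b3 - a3*b0 + a1*b2 - a2*b1"
  by (simp add: sform_def)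

text \<open>The coordinate along e3; the points of P1 are exactly those where it does not vanish.\<close>
definition coord3 :: "'a vec4 \<Rightarrow> 'a" where
  "coord3 v = snd (snd (snd v))"

lemma coord3_simp [simp]: "coord3 (a0,a1,a2,a3) = a3"
  by (simp add: coord3_def)

lemma coord3_lincomb:
  "coord3 (v4_add (v4_smult s a) (v4_smult r c)) = s * coord3 a + r * coord3 (c::'a::field vec4)"
  by (cases a rule: prod_cases4; cases c rule: prod_cases4) simp

lemma coord3_smult: "coord3 (v4_smult s v) = s * coord3 v"
  by (cases v rule: prod_cases4) simp

lemma sform_lincomb:
  "sform (v4_add (v4_smult a u) (v4_smult b w)) c = a * sform u c + b * sform w (c::'a::field vec4)"
  by (cases u rule: prod_cases4; cases w rule: prod_cases4; cases c rule: prod_cases4)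
    (simp add: algebra_simps)

lemma sform_lincomb_right:
  "sform c (v4_add (v4_smult a u) (v4_smult b w)) = a * sform c u + b * sform c (w::'a::field vec4)"
  by (cases u rule: prod_cases4; cases w rule: prod_cases4; cases c rule: prod_cases4)
    (simp add: algebra_simps)

lemma sform_add: "sform (v4_add x y) c = sform x c + sform y (c::'a::field vec4)"
  by (cases x rule: prod_cases4; cases y rule: prod_cases4; cases c rule: prod_cases4)
    (simp add: algebra_simps)

lemma sform_smult: "sform (v4_smult s x) y = s * sform x (y::'a::field vec4)"
  by (cases x rule: prod_cases4; cases y rule: prod_cases4) (simp add: algebra_simps)

lemma sform_zero: "sform (0,0,0,0) (c::'a::field vec4) = 0"
  by (cases c rule: prod_cases4) simp

lemma sform_self: "sform u (u::'a::field vec4) = 0"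
  by (cases u rule: prod_cases4) (simp add: algebra_simps)

lemma sform_skew: "sform u w = - sform w (u::'a::field vec4)"
  by (cases u rule: prod_cases4; cases w rule: prod_cases4) (simp add: algebra_simps)

lemma smult_nonzero: "(s::'a::field) \<noteq> 0 \<Longrightarrow> x \<noteq> (0,0,0,0) \<Longrightarrow> v4_smult s x \<noteq> (0,0,0,0)"
  by (cases x rule: prod_cases4) auto

lemma lincomb_zero_iff:
  assumes "lin_indep2 a (c::'a::field vec4)"
  shows "v4_add (v4_smult s a) (v4_smult r c) = (0,0,0,0) \<longleftrightarrow> s = 0 \<and> r = 0"
proof
  show "v4_add (v4_smult s a) (v4_smult r c) = (0,0,0,0) \<Longrightarrow> s = 0 \<and> r = 0"
    using assms unfolding lin_indep2_def by blast
  show "s = 0 \<and> r = 0 \<Longrightarrow> v4_add (v4_smult s a) (v4_smult r c) = (0,0,0,0)"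
    by (cases a rule: prod_cases4; cases c rule: prod_cases4) simp
qed

section \<open>Spans, points and lines\<close>

lemma span2_mem: "x \<in> span2 u w \<longleftrightarrow> (\<exists>a b. x = v4_add (v4_smult a u) (v4_smult b w))"
  by (auto simp: span2_def)

lemma span2_smult:
  assumes "x \<in> span2 u w"
  shows "v4_smult (c::'a::field) x \<in> span2 u w"
proof -
  obtain a b where x: "x = v4_add (v4_smult a u) (v4_smult b w)" using assms by (auto simp: span2_mem)
  have "v4_smult c x = v4_add (v4_smult (c*a) u) (v4_smult (c*b) w)"
    unfolding x by (cases u rule: prod_cases4; cases w rule: prod_cases4) (simp add: algebra_simps)
  then show ?thesis unfolding span2_mem by blast
qed

lemma span2_add:
  assumes "x \<in> span2 u w" "y \<in> span2 u w"
  shows "v4_add x (y::'a::field vec4) \<in> span2 u w"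
proof -
  obtain a b a' b' where x: "x = v4_add (v4_smult a u) (v4_smult b w)"
    and y: "y = v4_add (v4_smult a' u) (v4_smult b' w)" using assms by (auto simp: span2_mem)
  have "v4_add x y = v4_add (v4_smult (a+a') u) (v4_smult (b+b') w)"
    unfolding x y by (cases u rule: prod_cases4; cases w rule: prod_cases4) (simp add: algebra_simps)
  then show ?thesis unfolding span2_mem by blast
qed

lemma span2_zero: "(0,0,0,0) \<in> span2 u (w::'a::field vec4)"
proof -
  have "(0,0,0,0) = v4_add (v4_smult 0 u) (v4_smult 0 w)"
    by (cases u rule: prod_cases4; cases w rule: prod_cases4) simp
  then show ?thesis unfolding span2_mem by blast
qed

lemma span2_left: "u \<in> span2 u (w::'a::field vec4)"
  unfolding span2_mem
  by (rule exI[of _ 1], rule exI[of _ 0], cases u rule: prod_cases4, cases w rule: prod_cases4) simp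

lemma mem_span1: "v \<in> span1 (v::'a::field vec4)"
  by (cases v rule: prod_cases4) (auto simp: span1_def intro!: exI[of _ 1])

lemma span1_scale:
  assumes "(s::'a::field) \<noteq> 0"
  shows "span1 (v4_smult s v) = span1 v"
proof -
  have "v4_smult c (v4_smult s v) = v4_smult (c*s) v" for c
    by (cases v rule: prod_cases4) (simp add: algebra_simps)
  moreover have "v4_smult c v = v4_smult (c/s) (v4_smult s v)" for c
    using assms by (cases v rule: prod_cases4) (simp add: field_simps)
  ultimately show ?thesis unfolding span1_def by blast
qed

lemma span1_Points: "v \<noteq> (0,0,0,0) \<Longrightarrow> span1 v \<in> Points"
  unfolding Points_def by blast

lemma chi_span2:
  assumes "v \<noteq> (0,0,0,0)"
  shows "chi (span2 u w) (span1 v) = (if v \<in> span2 u (w::'a::field vec4) then 1 else 0)"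
proof -
  have "span1 v \<subseteq> span2 u w \<longleftrightarrow> v \<in> span2 u w"
    using mem_span1[of v] span2_smult[of v u w] by (auto simp: span1_def)
  then show ?thesis using assms by (simp add: chi_def span1_Points)
qed

lemma LinesE:
  assumes "l \<in> Lines"
  obtains u w where "lin_indep2 u w" "l = span2 u w" "\<forall>x\<in>l. \<forall>y\<in>l. sform x y = (0::'a::field)"
  using assms unfolding Lines_def by blast

lemma plane_meets_hyperplane:
  assumes "lin_indep2 u w"
  shows "\<exists>z\<in>span2 u w. z \<noteq> (0,0,0,0) \<and> sform z c = (0::'a::field)"
proof (cases "sform u c = 0")
  case True
  have "v4_add (v4_smult 1 u) (v4_smult 0 w) \<noteq> (0,0,0,0)"
    using lincomb_zero_iff[OF assms] by simp
  then have "u \<noteq> (0,0,0,0)" by (cases w rule: prod_cases4) auto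
  then show ?thesis using True span2_left by blast
next
  case False
  define z where "z = v4_add (v4_smult (sform w c) u) (v4_smult (- sform u c) w)"
  have "z \<in> span2 u w" unfolding z_def span2_mem by blast
  moreover have "z \<noteq> (0,0,0,0)" using lincomb_zero_iff[OF assms] False unfolding z_def by simp
  moreover have "sform z c = 0" unfolding z_def sform_lincomb by (simp add: algebra_simps)
  ultimately show ?thesis by blast
qed

section \<open>Parity arguments in characteristic 2\<close>

lemma even_card_involution:
  assumes "finite S" "\<forall>x\<in>S. \<sigma> x \<in> S \<and> \<sigma> x \<noteq> x \<and> \<sigma> (\<sigma> x) = x"
  shows "even (card S)"
  using assms
proof (induction "card S" arbitrary: S rule: less_induct)
  case less
  show ?case
  proof (cases "S = {}")
    case False
    then obtain x where x: "x \<in> S" by blast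
    have sx: "\<sigma> x \<in> S" "\<sigma> x \<noteq> x" using less.prems x by auto
    define S' where "S' = S - {x, \<sigma> x}"
    have card_S: "card S = card S' + 2"
    proof -
      have "card {x, \<sigma> x} = 2" "{x, \<sigma> x} \<subseteq> S" using sx x by auto
      moreover have "card {x, \<sigma> x} \<le> card S" using less.prems(1) x sx by (intro card_mono) auto
      ultimately show ?thesis using less.prems(1) unfolding S'_def by (simp add: card_Diff_subset)
    qed
    have "\<sigma> y \<in> S' \<and> \<sigma> y \<noteq> y \<and> \<sigma> (\<sigma> y) = y" if "y \<in> S'" for y
    proof -
      have y: "y \<in> S" "y \<noteq> x" "y \<noteq> \<sigma> x" using that unfolding S'_def by auto
      have \<sigma>y: "\<sigma> y \<in> S" "\<sigma> y \<noteq> y" "\<sigma> (\<sigma> y) = y" using less.prems(2) y(1) by auto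
      have "\<sigma> y \<noteq> x" "\<sigma> y \<noteq> \<sigma> x" using \<sigma>y(3) y(2,3) less.prems(2) x by metis+
      then show ?thesis using \<sigma>y unfolding S'_def by auto
    qed
    then have "even (card S')"
      using less.hyps[of S'] less.prems(1) card_S unfolding S'_def by simp
    then show ?thesis using card_S by simp
  qed simp
qed

text \<open>In characteristic 2 the translation by 1 is such an involution, so q is even.\<close>
lemma char2_card_even:
  assumes "(1::'a::{ring_1,finite}) + 1 = 0"
  shows "even (card (UNIV :: 'a set))"
proof (rule even_card_involution[where \<sigma> = "\<lambda>x. x + 1"])
  have "x + 1 + 1 = x" for x :: 'a using assms by (simp add: add.assoc)
  then show "\<forall>x\<in>UNIV. x + 1 \<in> UNIV \<and> x + 1 \<noteq> (x::'a) \<and> x + 1 + 1 = x" by simp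
qed simp

text \<open>Conversely, negation is such an involution on the nonzero elements of a field of odd
  characteristic, so a finite field of even order has characteristic 2.\<close>
lemma card_even_char2:
  assumes "even (card (UNIV :: 'a::{field,finite} set))"
  shows "(1::'a) + 1 = 0"
proof (rule ccontr)
  assume odd_char: "(1::'a) + 1 \<noteq> 0"
  have "even (card (UNIV - {0::'a}))"
  proof (rule even_card_involution[where \<sigma> = uminus])
    have "- x \<noteq> x" if "x \<noteq> 0" for x :: 'a
    proof
      assume "- x = x"
      then have "(1 + 1) * x = 0" by (simp add: algebra_simps)
      with odd_char that show False by simp
    qed
    then show "\<forall>x\<in>UNIV - {0::'a}. - x \<in> UNIV - {0} \<and> - x \<noteq> x \<and> - (- x) = x" by auto
  qed simp
  with assms show False by (simp add: card_Diff_subset)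
qed

lemma of_nat_bit: "(of_nat n :: bit) = (if even n then 0 else 1)"
  by (induction n) auto

text \<open>In characteristic 2 there is an odd number q - 1 of nonzero scalars, so summing a
  constant over them in F2 returns the constant.\<close>
lemma card_nonzero_odd:
  assumes "(1::'a::{field,finite}) + 1 = 0"
  shows "odd (card (UNIV - {0::'a}))"
  using char2_card_even[OF assms] by (simp add: card_Diff_subset)

lemma sum_nonzero_scalars:
  assumes "(1::'a::{field,finite}) + 1 = 0"
  shows "(\<Sum>s\<in>UNIV - {0::'a}. c) = (c::bit)"
  using card_nonzero_odd[OF assms] by (simp add: of_nat_bit)

lemma translation_invariant_even:
  assumes "(1::'a::field) + 1 = 0" "finite W" "z \<noteq> (0,0,0,0)" "\<forall>v\<in>W. v4_add v z \<in> W"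
  shows "even (card (W :: 'a vec4 set))"
proof (rule even_card_involution[where \<sigma> = "\<lambda>v. v4_add v z"])
  have self_inverse: "x + x = 0" for x :: 'a
    using assms(1) by (metis distrib_left mult_1_right mult_zero_right)
  show "\<forall>x\<in>W. v4_add x z \<in> W \<and> v4_add x z \<noteq> x \<and> v4_add (v4_add x z) z = x"
  proof (intro ballI conjI)
    fix x assume "x \<in> W"
    then show "v4_add x z \<in> W" using assms(4) by blast
    show "v4_add x z \<noteq> x" using assms(3)
      by (cases x rule: prod_cases4; cases z rule: prod_cases4) auto
    show "v4_add (v4_add x z) z = x"
      by (cases x rule: prod_cases4; cases z rule: prod_cases4) (simp add: add.assoc self_inverse)
  qed
qed (use assms in auto)

lemma subgroup_nonzero_odd:
  assumes "(1::'a::{field,finite}) + 1 = 0" "(0,0,0,0) \<in> W"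
    and "\<forall>x\<in>W. \<forall>y\<in>W. v4_add x y \<in> (W :: 'a vec4 set)"
    and "z \<in> W" "z \<noteq> (0,0,0,0)"
  shows "odd (card (W - {(0,0,0,0)}))"
proof -
  have "even (card W)" using translation_invariant_even[OF assms(1) _ assms(5)] assms(3,4) by simp
  moreover have "card W \<noteq> 0" using assms(2) by auto
  ultimately show ?thesis using assms(2) by simp
qed

section \<open>Spans over F2 and parity checks\<close>

lemma fscale_vector_space: "vector_space (fscale :: bit \<Rightarrow> ('x \<Rightarrow> bit) \<Rightarrow> ('x \<Rightarrow> bit))"
  by unfold_locales
    (simp_all only: fscale_def plus_fun_def distrib_left distrib_right mult.assoc mult_1_left)

lemma fscale_module: "module (fscale :: bit \<Rightarrow> ('x \<Rightarrow> bit) \<Rightarrow> ('x \<Rightarrow> bit))"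
  using fscale_vector_space by (simp add: module_iff_vector_space)

lemma sum_fun_apply: "(sum F A) x = (\<Sum>a\<in>A. F a x)"
  by (induction A rule: infinite_finite_induct) auto

lemma fscale_subspace:
  assumes "0 \<in> A" "\<forall>x\<in>A. \<forall>y\<in>A. x + y \<in> A"
  shows "module.subspace fscale (A :: ('x \<Rightarrow> bit) set)"
proof -
  have "fscale 0 x = 0" "fscale 1 x = x" for x :: "'x \<Rightarrow> bit"
    by (simp_all only: fscale_def mult_zero_left mult_1_left zero_fun_def)
  then have "fscale c x \<in> A" if "x \<in> A" for c x
    using that assms(1) by (cases c) simp_all
  then show ?thesis using assms by (simp add: module.subspace_def[OF fscale_module])
qed

lemma fscale_span_subset:
  assumes "S \<subseteq> A" "0 \<in> A" "\<forall>x\<in>A. \<forall>y\<in>A. x + y \<in> A"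
  shows "module.span fscale S \<subseteq> (A :: ('x \<Rightarrow> bit) set)"
  by (rule module.span_minimal[OF fscale_module assms(1) fscale_subspace[OF assms(2,3)]])

lemma code_vanishes_off_Points:
  assumes "f \<in> (code_PL :: ('a::field vec4 set \<Rightarrow> bit) set)" "p \<notin> Points"
  shows "f p = 0"
proof -
  have "code_PL \<subseteq> {f :: 'a vec4 set \<Rightarrow> bit. f p = 0}"
    unfolding code_PL_def using assms(2) by (intro fscale_span_subset) (auto simp: chi_def)
  then show ?thesis using assms(1) by blast
qed

text \<open>The parity check attached to a set G of vectors: the sum of f over the nonzero vectors
  of G, each point being counted once for every spanning vector.\<close>
definition check_sum :: "'a::{field,finite} vec4 set \<Rightarrow> ('a vec4 set \<Rightarrow> bit) \<Rightarrow> bit" where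
  "check_sum G f = (\<Sum>v\<in>G - {(0,0,0,0)}. f (span1 v))"

lemma check_sum_chi:
  assumes "l = span2 u w"
  shows "check_sum G (chi l) = of_nat (card (l \<inter> G - {(0,0,0,0)}))"
proof -
  have "check_sum G (chi l) = (\<Sum>v\<in>G - {(0,0,0,0)}. if v \<in> l then 1 else 0)"
    unfolding check_sum_def assms by (intro sum.cong refl) (simp add: chi_span2)
  also have "\<dots> = (\<Sum>v\<in>(G - {(0,0,0,0)}) \<inter> l. 1)"
    by (rule sum.inter_restrict[symmetric]) simp
  also have "(G - {(0,0,0,0)}) \<inter> l = l \<inter> G - {(0,0,0,0)}" by blast
  finally show ?thesis by simp
qed

lemma parity_check:
  assumes even_lines: "\<forall>l\<in>(Lines :: 'a::{field,finite} vec4 set set). even (card (l \<inter> G - {(0,0,0,0)}))"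
    and f: "f \<in> code_PL"
  shows "check_sum G f = 0"
proof -
  have "check_sum G (chi l) = 0" if "l \<in> Lines" for l :: "'a vec4 set"
  proof -
    obtain u w where "l = span2 u w" using \<open>l \<in> Lines\<close> by (rule LinesE)
    then show ?thesis using that even_lines check_sum_chi[of l] by (simp add: of_nat_bit)
  qed
  moreover have "check_sum G (x + y) = check_sum G x + check_sum G y" for x y
    by (simp only: check_sum_def plus_fun_apply sum.distrib)
  ultimately have "code_PL \<subseteq> {f. check_sum G f = 0}"
    unfolding code_PL_def by (intro fscale_span_subset) (auto simp: check_sum_def)
  then show ?thesis using f by blast
qed

lemma kernel_vanishes_P1:
  assumes "f \<in> (ker_restr_P1 :: ('a::field vec4 set \<Rightarrow> bit) set)" "coord3 v \<noteq> 0"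
  shows "f (span1 v) = 0"
proof -
  have "span1 v \<in> Points1"
    using assms(2) span1_Points[of v] unfolding Points1_def
    by (cases v rule: prod_cases4) auto
  then show ?thesis using assms(1) unfolding ker_restr_P1_def by blast
qed

lemma check_sum_kernel:
  assumes "f \<in> ker_restr_P1"
  shows "check_sum G f = (\<Sum>v\<in>{v \<in> G - {(0,0,0,0)}. coord3 v = 0}. f (span1 (v::'a::{field,finite} vec4)))"
  unfolding check_sum_def
  by (rule sum.mono_neutral_right) (use kernel_vanishes_P1[OF assms] in auto)

section \<open>Sets meeting every line evenly\<close>

text \<open>The complement of the hyperplane e3^perp = {v. fst v = 0}: inside a line the vectors with
  fst v = 0 form a nonzero subspace, and its nonzero translations preserve the complement.\<close>
lemma line_meets_affine_part_even:
  assumes ch: "(1::'a::{field,finite}) + 1 = 0" and l: "l \<in> (Lines :: 'a vec4 set set)"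
  shows "even (card (l \<inter> {v. fst v \<noteq> 0} - {(0,0,0,0)}))"
proof -
  obtain u w where uw: "lin_indep2 u w" "l = span2 u w" using l by (rule LinesE)
  have fst_eq: "sform v (0,0,0,1) = fst v" for v :: "'a vec4"
    by (cases v rule: prod_cases4) simp
  obtain z where z: "z \<in> l" "z \<noteq> (0,0,0,0)" "fst z = 0"
    using plane_meets_hyperplane[OF uw(1), of "(0,0,0,1)"] uw(2) fst_eq by metis
  have "fst (v4_add v z) = fst v" for v
    using z(3) by (cases v rule: prod_cases4; cases z rule: prod_cases4) simp
  moreover have "v4_add v z \<in> l" if "v \<in> l" for v
    using that z(1) uw(2) span2_add by blast
  ultimately show ?thesis
    by (intro translation_invariant_even[OF ch _ z(2)]) auto
qed

definition orth :: "'a::field vec4 \<Rightarrow> 'a vec4 \<Rightarrow> 'a vec4 set" where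
  "orth x y = {v. sform v x = 0 \<and> sform v y = 0}"

lemma orth_smult: "v \<in> orth x y \<Longrightarrow> v4_smult s v \<in> orth x y"
  by (simp add: orth_def sform_smult del: sform_simp v4_smult_simp)

lemma orth_subgroup: "(0,0,0,0) \<in> orth x y" "\<forall>v\<in>orth x y. \<forall>w\<in>orth x y. v4_add v w \<in> orth x y"
  by (simp_all add: orth_def sform_zero sform_add del: sform_simp v4_add_simp)

text \<open>If a totally isotropic line contains a nonzero
  vector y orthogonal to b and d, it contains a nonzero vector orthogonal to a and c: y is a
  combination of a and c, and the nonzero vector of the line orthogonal to a suitable one of
  a, c is orthogonal to y, hence to both.\<close>
lemma isotropic_line_meets_complement:
  assumes U: "orth b d \<subseteq> span2 a (c::'a::field vec4)"
    and li: "lin_indep2 u w" and iso: "\<forall>x\<in>span2 u w. \<forall>y\<in>span2 u w. sform x y = 0"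
    and y: "y \<in> span2 u w \<inter> orth b d" "y \<noteq> (0,0,0,0)"
  shows "\<exists>z\<in>span2 u w \<inter> orth a c. z \<noteq> (0,0,0,0)"
proof -
  have "y \<in> span2 a c" using U y(1) by blast
  then obtain s r where sr: "y = v4_add (v4_smult s a) (v4_smult r c)" by (auto simp: span2_mem)
  obtain z where z: "z \<in> span2 u w" "z \<noteq> (0,0,0,0)" "sform z (if r = 0 then c else a) = 0"
    using plane_meets_hyperplane[OF li] by blast
  have "sform z y = 0" using iso z(1) y(1) by blast
  then have zy: "s * sform z a + r * sform z c = 0" using sr by (simp add: sform_lincomb_right)
  have "s \<noteq> 0" if "r = 0"
    using that sr y(2) by (cases a rule: prod_cases4; cases c rule: prod_cases4) auto
  then have "sform z a = 0 \<and> sform z c = 0"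
    using z(3) zy by (cases "r = 0") auto
  then show ?thesis using z(1,2) by (auto simp: orth_def)
qed

text \<open>If moreover orth(a,c) is contained in span(b,d) and sform a c <> 0, every line meets
  orth(b,d) union orth(a,c) in an even number of nonzero vectors: the two parts are subspaces
  meeting only in 0, and the line meets either both of them nontrivially (then in an odd number
  of nonzero vectors each) or neither.\<close>
lemma line_meets_orth_pair_even:
  assumes ch: "(1::'a::{field,finite}) + 1 = 0"
    and U: "orth b d \<subseteq> span2 a (c::'a vec4)" and U': "orth a c \<subseteq> span2 b d"
    and ac: "sform a c \<noteq> 0" and l: "l \<in> (Lines :: 'a vec4 set set)"
  shows "even (card (l \<inter> (orth b d \<union> orth a c) - {(0,0,0,0)}))"
proof -
  obtain u w where uw: "lin_indep2 u w" "l = span2 u w" "\<forall>x\<in>l. \<forall>y\<in>l. sform x y = 0"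
    using l by (rule LinesE)
  define W1 where "W1 = l \<inter> orth b d"
  define W2 where "W2 = l \<inter> orth a c"
  have disjoint: "(W1 - {(0,0,0,0)}) \<inter> (W2 - {(0,0,0,0)}) = {}"
  proof -
    have "v = (0,0,0,0)" if "v \<in> orth b d" "v \<in> orth a c" for v
    proof -
      have "v \<in> span2 a c" using U that(1) by blast
      then obtain s r where sr: "v = v4_add (v4_smult s a) (v4_smult r c)" by (auto simp: span2_mem)
      have "r * sform c a = 0" "s * sform a c = 0"
        using that(2) sr by (simp_all add: orth_def sform_lincomb sform_self)
      then have "r = 0" "s = 0" using ac sform_skew[of c a] by auto
      then show ?thesis using sr by (cases a rule: prod_cases4; cases c rule: prod_cases4) simp
    qed
    then show ?thesis unfolding W1_def W2_def by blast
  qed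
  have l_subgroup: "(0,0,0,0) \<in> l" "\<forall>x\<in>l. \<forall>y\<in>l. v4_add x y \<in> l"
    using uw(2) span2_zero span2_add by blast+
  have W1_subgroup: "(0,0,0,0) \<in> W1" "\<forall>x\<in>W1. \<forall>y\<in>W1. v4_add x y \<in> W1"
    unfolding W1_def using l_subgroup orth_subgroup[of b d] by blast+
  have W2_subgroup: "(0,0,0,0) \<in> W2" "\<forall>x\<in>W2. \<forall>y\<in>W2. v4_add x y \<in> W2"
    unfolding W2_def using l_subgroup orth_subgroup[of a c] by blast+
  have same_nontrivial: "(\<exists>v\<in>W1. v \<noteq> (0,0,0,0)) \<longleftrightarrow> (\<exists>v\<in>W2. v \<noteq> (0,0,0,0))"
  proof
    assume "\<exists>v\<in>W1. v \<noteq> (0,0,0,0)"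
    then show "\<exists>v\<in>W2. v \<noteq> (0,0,0,0)"
      using isotropic_line_meets_complement[OF U uw(1) uw(3)[unfolded uw(2)]]
      unfolding W1_def W2_def uw(2) by blast
  next
    assume "\<exists>v\<in>W2. v \<noteq> (0,0,0,0)"
    then show "\<exists>v\<in>W1. v \<noteq> (0,0,0,0)"
      using isotropic_line_meets_complement[OF U' uw(1) uw(3)[unfolded uw(2)]]
      unfolding W1_def W2_def uw(2) by blast
  qed
  have split: "l \<inter> (orth b d \<union> orth a c) - {(0,0,0,0)} = (W1 - {(0,0,0,0)}) \<union> (W2 - {(0,0,0,0)})"
    unfolding W1_def W2_def by blast
  show ?thesis
  proof (cases "\<exists>v\<in>W1. v \<noteq> (0,0,0,0)")
    case True
    then obtain z1 z2 where z: "z1 \<in> W1" "z1 \<noteq> (0,0,0,0)" "z2 \<in> W2" "z2 \<noteq> (0,0,0,0)"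
      using same_nontrivial by blast
    have "odd (card (W1 - {(0,0,0,0)}))" by (rule subgroup_nonzero_odd[OF ch W1_subgroup z(1,2)])
    moreover have "odd (card (W2 - {(0,0,0,0)}))" by (rule subgroup_nonzero_odd[OF ch W2_subgroup z(3,4)])
    ultimately show ?thesis unfolding split by (simp add: card_Un_disjoint[OF _ _ disjoint])
  next
    case False
    then have "W1 - {(0,0,0,0)} = {}" "W2 - {(0,0,0,0)} = {}" using same_nontrivial by blast+
    then show ?thesis unfolding split by (simp only: Un_empty card.empty) simp
  qed
qed

section \<open>The lines through p0\<close>

text \<open>The q + 1 lines through p0 are indexed by the points of the projective line:
  Some g stands for the direction (0,1,g,0), None for (0,0,1,0).\<close>
definition p0_line :: "'a::field option \<Rightarrow> 'a vec4 set" where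
  "p0_line i = (case i of Some g \<Rightarrow> span2 (1,0,0,0) (0,1,g,0) | None \<Rightarrow> span2 (1,0,0,0) (0,0,1,0))"

definition p0_dir :: "'a::field option \<Rightarrow> 'a vec4" where
  "p0_dir i = (case i of Some g \<Rightarrow> (0,1,g,0) | None \<Rightarrow> (0,0,1,0))"

text \<open>The index of the line through p0 and the point (v0:x:y:0).\<close>
definition dir_index :: "'a::field \<Rightarrow> 'a \<Rightarrow> 'a option" where
  "dir_index x y = (if x \<noteq> 0 then Some (y / x) else None)"

lemma mem_p0_line_Some: "(v0,v1,v2,v3) \<in> p0_line (Some g) \<longleftrightarrow> v3 = 0 \<and> v2 = g * (v1::'a::field)"
  by (auto simp: p0_line_def span2_mem mult.commute)

lemma mem_p0_line_None: "(v0,v1,v2,v3) \<in> p0_line None \<longleftrightarrow> v3 = 0 \<and> (v1::'a::field) = 0"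
  by (auto simp: p0_line_def span2_mem)

lemmas mem_p0_line = mem_p0_line_Some mem_p0_line_None

lemma p0_line_in_Lines: "p0_line i \<in> (Lines :: 'a::field vec4 set set)"
proof -
  obtain w :: "'a vec4" where w: "p0_line i = span2 (1,0,0,0) w" "coord3 w = 0" "fst w = 0"
    "w \<noteq> (0,0,0,0)"
    by (cases i) (auto simp: p0_line_def)
  have "lin_indep2 (1,0,0,0) w"
    using w(2-4) by (cases w rule: prod_cases4) (auto simp: lin_indep2_def)
  moreover have "\<forall>x\<in>span2 (1,0,0,0) w. \<forall>y\<in>span2 (1,0,0,0) w. sform x y = 0"
    using w(2,3) by (cases w rule: prod_cases4) (auto simp: span2_mem algebra_simps)
  ultimately show ?thesis unfolding Lines_def using w(1) by blast
qed

lemma mem_p0_line_dir_index: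
  assumes "(v1,v2) \<noteq> (0,0)"
  shows "(v0,v1,v2,0) \<in> p0_line i \<longleftrightarrow> i = dir_index v1 (v2::'a::field)"
  using assms by (cases i) (auto simp: mem_p0_line dir_index_def field_simps)

lemma chi_p0_line:
  "v \<noteq> (0,0,0,0) \<Longrightarrow> chi (p0_line i) (span1 v) = (if v \<in> p0_line i then 1 else 0)"
  by (cases i) (simp_all add: p0_line_def chi_span2)

lemma chi_p0_line_dir: "chi (p0_line j) (span1 (p0_dir i)) = (if j = (i :: 'a::field option) then 1 else 0)"
proof -
  have "p0_dir i \<noteq> (0,0,0,0)" "p0_dir i \<in> p0_line j \<longleftrightarrow> j = i"
    by (cases i; cases j; auto simp: p0_dir_def mem_p0_line)+
  then show ?thesis by (simp add: chi_p0_line)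
qed

lemma chi_p0_line_kernel: "chi (p0_line i) \<in> (ker_restr_P1 :: ('a::field vec4 set \<Rightarrow> bit) set)"
  unfolding ker_restr_P1_def
proof (intro CollectI ballI)
  fix p :: "'a vec4 set" assume "p \<in> Points1"
  then obtain a b c d where p: "d \<noteq> 0" "p = span1 (a,b,c,d)" unfolding Points1_def by blast
  have "(a,b,c,d) \<notin> p0_line i" using p(1) by (cases i) (simp_all add: mem_p0_line)
  then show "chi (p0_line i) p = 0" using p by (simp add: chi_p0_line)
qed

lemma card_dir_fiber:
  "card {p \<in> UNIV - {(0::'a::{field,finite}, 0::'a)}. dir_index (fst p) (snd p) = i} = card (UNIV - {0::'a})"
proof -
  have "{p \<in> UNIV - {(0,0)}. dir_index (fst p) (snd p) = i} =
      (\<lambda>x::'a. case i of Some g \<Rightarrow> (x, g * x) | None \<Rightarrow> (0, x)) ` (UNIV - {0})"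
    by (cases i) (auto simp: dir_index_def image_iff field_simps split: if_splits)
  moreover have "inj_on (\<lambda>x. case i of Some g \<Rightarrow> (x, g * x) | None \<Rightarrow> (0::'a, x)) (UNIV - {0})"
    by (cases i) (auto simp: inj_on_def)
  ultimately show ?thesis by (simp add: card_image)
qed

lemma sum_over_directions:
  assumes ch: "(1::'a::{field,finite}) + 1 = 0"
  shows "(\<Sum>p\<in>UNIV - {(0::'a,0::'a)}. h (dir_index (fst p) (snd p))) = (\<Sum>i\<in>UNIV. h i :: bit)"
proof -
  have odd_count: "of_nat (card (UNIV - {0::'a})) = (1::bit)"
    using card_nonzero_odd[OF ch] by (simp add: of_nat_bit)
  have "(\<Sum>p\<in>UNIV - {(0::'a,0::'a)}. h (dir_index (fst p) (snd p))) =
      (\<Sum>i\<in>UNIV. \<Sum>p\<in>{p \<in> UNIV - {(0,0)}. dir_index (fst p) (snd p) = i}. h (dir_index (fst p) (snd p)))"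
    by (rule sum.group[symmetric]) auto
  also have "\<dots> = (\<Sum>i\<in>UNIV. \<Sum>p\<in>{p \<in> UNIV - {(0::'a,0::'a)}. dir_index (fst p) (snd p) = i}. h i)"
    by (intro sum.cong) auto
  also have "\<dots> = (\<Sum>i\<in>UNIV. h i)"
    by (simp only: sum_constant card_dir_fiber odd_count mult_1_left)
  finally show ?thesis .
qed

section \<open>The structure of the kernel\<close>

text \<open>Summing the values of f at the points spanned by the nonzero multiples of a vector a
  gives f(<a>), since there are q - 1 of them.\<close>
lemma sum_multiples:
  assumes ch: "(1::'a::{field,finite}) + 1 = 0" and a: "a \<noteq> (0,0,0,0)"
  shows "(\<Sum>v\<in>(\<lambda>s. v4_smult s a) ` (UNIV - {0::'a}). f (span1 v)) = (f (span1 a) :: bit)"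
proof -
  have "inj_on (\<lambda>s. v4_smult s a) (UNIV - {0::'a})"
    using a by (intro inj_onI) (cases a rule: prod_cases4; auto)
  then have "(\<Sum>v\<in>(\<lambda>s. v4_smult s a) ` (UNIV - {0::'a}). f (span1 v)) = (\<Sum>s\<in>UNIV - {0::'a}. f (span1 a))"
    by (simp add: sum.reindex span1_scale)
  then show ?thesis using sum_nonzero_scalars[OF ch] by simp
qed

lemma plane_hyperplane_part:
  assumes "v \<in> span2 a c" "coord3 a = 0" "coord3 c \<noteq> (0::'a::field)" "coord3 v = 0" "v \<noteq> (0,0,0,0)"
  shows "v \<in> (\<lambda>s. v4_smult s a) ` (UNIV - {0})"
proof -
  obtain s r where sr: "v = v4_add (v4_smult s a) (v4_smult r c)" using assms(1) by (auto simp: span2_mem)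
  then have "r = 0" using assms(2-4) by (simp add: coord3_lincomb)
  then have "v = v4_smult s a" using sr by (cases a rule: prod_cases4; cases c rule: prod_cases4) simp
  then show ?thesis using assms(5) by (cases a rule: prod_cases4) (auto intro!: image_eqI[of _ _ s])
qed

text \<open>The second parity check.  Let U = span(a,c) and U' = span(b,d) be each other's orthogonal
  complements, where a, b lie in p0^perp and c, d do not.  The nonzero vectors of U union U'
  inside p0^perp are exactly the nonzero multiples of a and of b, so for f in K the check
  reads f(<a>) + f(<b>) = 0.\<close>
lemma orth_pair_check:
  assumes ch: "(1::'a::{field,finite}) + 1 = 0"
    and U: "orth b d \<subseteq> span2 a c" and U': "orth a c \<subseteq> span2 b (d::'a vec4)"
    and ac: "sform a c \<noteq> 0" and a_orth: "a \<in> orth b d" and b_orth: "b \<in> orth a c"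
    and coords: "coord3 a = 0" "coord3 b = 0" "coord3 c \<noteq> 0" "coord3 d \<noteq> 0"
    and nonzero: "a \<noteq> (0,0,0,0)" "b \<noteq> (0,0,0,0)"
    and f: "f \<in> ker_restr_P1 \<inter> code_PL"
  shows "f (span1 a) = f (span1 b)"
proof -
  define A where "A = (\<lambda>s. v4_smult s a) ` (UNIV - {0::'a})"
  define B where "B = (\<lambda>s. v4_smult s b) ` (UNIV - {0::'a})"
  let ?H = "{v \<in> orth b d \<union> orth a c - {(0,0,0,0)}. coord3 v = 0}"
  have H_subset: "?H \<subseteq> A \<union> B"
  proof
    fix v assume "v \<in> ?H"
    then have v: "v \<in> orth b d \<union> orth a c" "coord3 v = 0" "v \<noteq> (0,0,0,0)" by simp_all
    show "v \<in> A \<union> B"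
    proof (cases "v \<in> orth b d")
      case True
      then have "v \<in> span2 a c" using U by (rule subsetD[rotated])
      then have "v \<in> A" unfolding A_def by (rule plane_hyperplane_part[OF _ coords(1,3) v(2,3)])
      then show ?thesis by (rule UnI1)
    next
      case False
      then have "v \<in> span2 b d" using U' v(1) by blast
      then have "v \<in> B" unfolding B_def by (rule plane_hyperplane_part[OF _ coords(2,4) v(2,3)])
      then show ?thesis by (rule UnI2)
    qed
  qed
  have multiple_in_H: "v4_smult s x \<in> ?H"
    if "s \<noteq> 0" "x \<in> orth b d \<union> orth a c" "x \<noteq> (0,0,0,0)" "coord3 x = 0" for s x
  proof -
    have "v4_smult s x \<in> orth b d \<union> orth a c" using that(2) orth_smult by blast
    moreover have "v4_smult s x \<noteq> (0,0,0,0)" by (rule smult_nonzero[OF that(1,3)])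
    moreover have "coord3 (v4_smult s x) = 0" by (simp add: coord3_smult that(4))
    ultimately show ?thesis by simp
  qed
  have "A \<subseteq> ?H" unfolding A_def
    by (rule image_subsetI, rule multiple_in_H) (use a_orth nonzero(1) coords(1) in simp_all)
  moreover have "B \<subseteq> ?H" unfolding B_def
    by (rule image_subsetI, rule multiple_in_H) (use b_orth nonzero(2) coords(2) in simp_all)
  ultimately have part: "?H = A \<union> B" using H_subset by (intro subset_antisym Un_least)
  have disjoint: "A \<inter> B = {}"
  proof -
    have "v4_smult s a \<noteq> v4_smult t b" if "s \<noteq> 0" for s t
    proof -
      have "sform (v4_smult s a) c = s * sform a c" "sform (v4_smult t b) c = t * sform b c"
        by (rule sform_smult)+
      moreover have "sform b c = 0" using b_orth sform_skew[of b c] by (simp add: orth_def)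
      ultimately show ?thesis using that ac by auto
    qed
    then show ?thesis unfolding A_def B_def by blast
  qed
  have "0 = check_sum (orth b d \<union> orth a c) f"
    using parity_check line_meets_orth_pair_even[OF ch U U' ac] f by (metis IntE)
  also have "\<dots> = (\<Sum>v\<in>A \<union> B. f (span1 v))"
    using f check_sum_kernel[of f "orth b d \<union> orth a c"] unfolding part by blast
  also have "\<dots> = (\<Sum>v\<in>A. f (span1 v)) + (\<Sum>v\<in>B. f (span1 v))"
    by (rule sum.union_disjoint[OF _ _ disjoint]) simp_all
  also have "\<dots> = f (span1 a) + f (span1 b)"
    unfolding A_def B_def by (simp only: sum_multiples[OF ch nonzero(1)] sum_multiples[OF ch nonzero(2)])
  finally have "f (span1 a) + f (span1 b) = 0" by simp
  then show ?thesis by (cases "f (span1 a)"; cases "f (span1 b)") simp_all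
qed

text \<open>The second parity check applied along the line through p0 in direction (0,1,g,0): the
  points (x:1:g:0) all carry the same value.\<close>
lemma kernel_shift_Some:
  fixes x g :: "'a::{field,finite}"
  assumes ch: "(1::'a) + 1 = 0" and f: "f \<in> ker_restr_P1 \<inter> code_PL"
  shows "f (span1 (x,1,g,0)) = f (span1 (0,1,g,0))"
proof (cases "x = 0")
  case False
  show ?thesis
  proof (rule orth_pair_check[OF ch _ _ _ _ _ _ _ _ _ _ _ f, where c = "(0,0,0,1)" and d = "(0,0,-x,1)"])
    show "orth (0,1,g,0) (0,0,-x,1) \<subseteq> span2 (x,1,g,0) (0,0,0,1)"
    proof
      fix v assume v: "v \<in> orth (0,1,g,0) (0,0,-x,1)"
      obtain v0 v1 v2 v3 where v_def: "v = (v0,v1,v2,v3)" by (cases v rule: prod_cases4)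
      have "v2 = v1 * g" "v0 = x * v1" using v by (simp_all add: v_def orth_def algebra_simps)
      then show "v \<in> span2 (x,1,g,0) (0,0,0,1)"
        unfolding span2_mem v_def by (intro exI[of _ v1] exI[of _ v3]) (simp add: algebra_simps)
    qed
    show "orth (x,1,g,0) (0,0,0,1) \<subseteq> span2 (0,1,g,0) (0,0,-x,1)"
    proof
      fix v assume v: "v \<in> orth (x,1,g,0) (0,0,0,1)"
      obtain v0 v1 v2 v3 where v_def: "v = (v0,v1,v2,v3)" by (cases v rule: prod_cases4)
      have "v2 = v1 * g - v3 * x" "v0 = 0" using v by (simp_all add: v_def orth_def algebra_simps)
      then show "v \<in> span2 (0,1,g,0) (0,0,-x,1)"
        unfolding span2_mem v_def by (intro exI[of _ v1] exI[of _ v3]) (simp add: algebra_simps)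
    qed
  qed (use False in \<open>simp_all add: orth_def algebra_simps\<close>)
qed simp

lemma kernel_shift_None:
  fixes x :: "'a::{field,finite}"
  assumes ch: "(1::'a) + 1 = 0" and f: "f \<in> ker_restr_P1 \<inter> code_PL"
  shows "f (span1 (x,0,1,0)) = f (span1 (0,0,1,0))"
proof (cases "x = 0")
  case False
  show ?thesis
  proof (rule orth_pair_check[OF ch _ _ _ _ _ _ _ _ _ _ _ f, where c = "(0,0,0,1)" and d = "(0,x,0,1)"])
    show "orth (0,0,1,0) (0,x,0,1) \<subseteq> span2 (x,0,1,0) (0,0,0,1)"
    proof
      fix v assume v: "v \<in> orth (0,0,1,0) (0,x,0,1)"
      obtain v0 v1 v2 v3 where v_def: "v = (v0,v1,v2,v3)" by (cases v rule: prod_cases4)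
      have "v1 = 0" "v0 = v2 * x" using v by (simp_all add: v_def orth_def algebra_simps)
      then show "v \<in> span2 (x,0,1,0) (0,0,0,1)"
        unfolding span2_mem v_def by (intro exI[of _ v2] exI[of _ v3]) (simp add: algebra_simps)
    qed
    show "orth (x,0,1,0) (0,0,0,1) \<subseteq> span2 (0,0,1,0) (0,x,0,1)"
    proof
      fix v assume v: "v \<in> orth (x,0,1,0) (0,0,0,1)"
      obtain v0 v1 v2 v3 where v_def: "v = (v0,v1,v2,v3)" by (cases v rule: prod_cases4)
      have "v1 = v3 * x" "v0 = 0" using v by (simp_all add: v_def orth_def algebra_simps)
      then show "v \<in> span2 (0,0,1,0) (0,x,0,1)"
        unfolding span2_mem v_def by (intro exI[of _ v2] exI[of _ v3]) (simp add: algebra_simps)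
    qed
  qed (use False in \<open>simp_all add: orth_def algebra_simps\<close>)
qed simp

lemma kernel_constant_on_p0_lines:
  fixes v0 v1 v2 :: "'a::{field,finite}"
  assumes ch: "(1::'a) + 1 = 0" and f: "f \<in> ker_restr_P1 \<inter> code_PL" and nz: "(v1,v2) \<noteq> (0,0)"
  shows "f (span1 (v0,v1,v2,0)) = f (span1 (p0_dir (dir_index v1 v2)))"
proof (cases "v1 = 0")
  case False
  have "span1 (v0,v1,v2,0) = span1 (v4_smult (inverse v1) (v0,v1,v2,0))"
    by (rule span1_scale[symmetric]) (simp add: False)
  also have "\<dots> = span1 (v0/v1, 1, v2/v1, 0)" using False by (simp add: divide_inverse mult.commute)
  finally show ?thesis
    using kernel_shift_Some[OF ch f, of "v0/v1" "v2/v1"] False by (simp add: p0_dir_def dir_index_def)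
next
  case True
  then have v2: "v2 \<noteq> 0" using nz by simp
  have "span1 (v0,v1,v2,0) = span1 (v4_smult (inverse v2) (v0,v1,v2,0))"
    by (rule span1_scale[symmetric]) (simp add: v2)
  also have "\<dots> = span1 (v0/v2, 0, 1, 0)" using v2 True by (simp add: divide_inverse mult.commute)
  finally show ?thesis
    using kernel_shift_None[OF ch f, of "v0/v2"] True by (simp add: p0_dir_def dir_index_def)
qed

lemma sum_affine_part:
  "(\<Sum>v\<in>{v. fst v \<noteq> 0 \<and> coord3 v = 0}. g v) =
     (\<Sum>a\<in>UNIV - {0::'a::{field,finite}}. \<Sum>q\<in>UNIV. g (a, fst q, snd q, 0))"
proof -
  let ?emb = "\<lambda>p::'a \<times> 'a \<times> 'a. (fst p, fst (snd p), snd (snd p), 0::'a)"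
  have "{v. fst v \<noteq> 0 \<and> coord3 v = 0} = ?emb ` ((UNIV - {0}) \<times> UNIV)"
    by (auto simp: image_iff coord3_def)
  moreover have "inj_on ?emb ((UNIV - {0}) \<times> UNIV)" by (auto simp: inj_on_def prod_eq_iff)
  ultimately show ?thesis by (simp add: sum.reindex sum.cartesian_product case_prod_unfold)
qed

text \<open>The first parity check, with G the complement of e3^perp: for f in K the value at p0 is
  the sum of the values at the direction points of the q + 1 lines through p0.  The point
  (a:x:y:0) carries the value of f at p0 if (x,y) = 0 and the value of its line otherwise, and
  each value is counted q - 1 times.\<close>
lemma kernel_value_p0:
  fixes f :: "'a::{field,finite} vec4 set \<Rightarrow> bit"
  assumes ch: "(1::'a) + 1 = 0" and f: "f \<in> ker_restr_P1 \<inter> code_PL"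
  shows "f (span1 (1,0,0,0)) = (\<Sum>i\<in>UNIV. f (span1 (p0_dir i)))"
proof -
  define \<psi> where "\<psi> q = (if q = (0,0) then f (span1 (1,0,0,0))
                          else f (span1 (p0_dir (dir_index (fst q) (snd q)))))" for q :: "'a \<times> 'a"
  have val_eq: "f (span1 (a, fst q, snd q, 0)) = \<psi> q" if "a \<noteq> 0" for a q
  proof (cases "q = (0,0)")
    case True
    have "span1 (a,0,0,0) = span1 (1,0,0,0)" using span1_scale[OF that, of "(1,0,0,0)"] by simp
    then show ?thesis using True by (simp add: \<psi>_def)
  next
    case False
    then show ?thesis
      using kernel_constant_on_p0_lines[OF ch f, of "fst q" "snd q" a] by (simp add: \<psi>_def)
  qed
  have "{v \<in> {v. fst v \<noteq> 0} - {(0,0,0,0)}. coord3 v = 0} = {v. fst v \<noteq> 0 \<and> coord3 v = (0::'a)}"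
    by auto
  then have "0 = (\<Sum>v\<in>{v. fst v \<noteq> 0 \<and> coord3 v = (0::'a)}. f (span1 v))"
    using parity_check[of "{v. fst v \<noteq> 0}" f] line_meets_affine_part_even[OF ch] f
      check_sum_kernel[of f "{v. fst v \<noteq> 0}"] by simp
  also have "\<dots> = (\<Sum>a\<in>UNIV - {0::'a}. \<Sum>q\<in>UNIV. \<psi> q)"
    unfolding sum_affine_part using val_eq by simp
  also have "\<dots> = (\<Sum>q\<in>UNIV. \<psi> q)" by (rule sum_nonzero_scalars[OF ch])
  also have "\<dots> = \<psi> (0,0) + (\<Sum>q\<in>UNIV - {(0,0)}. \<psi> q)" by (rule sum.remove) simp_all
  also have "(\<Sum>q\<in>UNIV - {(0,0)}. \<psi> q) = (\<Sum>i\<in>UNIV. f (span1 (p0_dir i)))"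
    unfolding sum_over_directions[OF ch, symmetric] by (intro sum.cong) (auto simp: \<psi>_def)
  finally have "f (span1 (1,0,0,0)) + (\<Sum>i\<in>UNIV. f (span1 (p0_dir i))) = 0"
    by (simp add: \<psi>_def)
  then show ?thesis
    by (cases "f (span1 (1,0,0,0))"; cases "\<Sum>i\<in>UNIV. f (span1 (p0_dir i))") simp_all
qed

lemma kernel_expansion:
  fixes f :: "'a::{field,finite} vec4 set \<Rightarrow> bit"
  assumes ch: "(1::'a) + 1 = 0" and f: "f \<in> ker_restr_P1 \<inter> code_PL"
  shows "f p = (\<Sum>i\<in>UNIV. f (span1 (p0_dir i)) * chi (p0_line i) p)"
proof (cases "p \<in> Points")
  case False
  then show ?thesis using code_vanishes_off_Points[of f p] f by (simp add: chi_def)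
next
  case True
  then obtain v where v: "p = span1 v" "v \<noteq> (0,0,0,0)" unfolding Points_def by blast
  obtain v0 v1 v2 v3 where "v = (v0,v1,v2,v3)" by (cases v rule: prod_cases4)
  then have p: "p = span1 (v0,v1,v2,v3)" "(v0,v1,v2,v3) \<noteq> (0,0,0,0)" using v by simp_all
  have chi_p: "chi (p0_line i) p = (if (v0,v1,v2,v3) \<in> p0_line i then 1 else 0)" for i
    using chi_p0_line[OF p(2)] p(1) by simp
  consider "v3 \<noteq> 0" | "v3 = 0" "(v1,v2) \<noteq> (0,0)" | "v3 = 0" "v1 = 0" "v2 = 0" by auto
  then show ?thesis
  proof cases
    case 1
    then have "f p = 0" using kernel_vanishes_P1[of f "(v0,v1,v2,v3)"] f p(1) by simp
    moreover have "(v0,v1,v2,v3) \<notin> p0_line i" for i using 1 by (cases i) (simp_all add: mem_p0_line)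
    ultimately show ?thesis by (simp add: chi_p)
  next
    case 2
    have "(\<Sum>i\<in>UNIV. f (span1 (p0_dir i)) * chi (p0_line i) p) =
        (\<Sum>i\<in>UNIV. if i = dir_index v1 v2 then f (span1 (p0_dir i)) else 0)"
      using mem_p0_line_dir_index[OF 2(2), of v0] 2(1) by (intro sum.cong) (simp_all add: chi_p)
    then show ?thesis using kernel_constant_on_p0_lines[OF ch f 2(2), of v0] 2(1) p(1) by simp
  next
    case 3
    then have v0: "v0 \<noteq> 0" using p(2) by simp
    have "p = span1 (1,0,0,0)" using p(1) 3 span1_scale[OF v0, of "(1,0,0,0)"] by simp
    moreover have chi_one: "chi (p0_line i) p = 1" for i
      using chi_p[of i] 3 by (cases i) (simp_all add: mem_p0_line)
    then have "(\<Sum>i\<in>UNIV. f (span1 (p0_dir i)) * chi (p0_line i) p) = (\<Sum>i\<in>UNIV. f (span1 (p0_dir i)))"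
      by (simp only: chi_one mult_1_right)
    ultimately show ?thesis using kernel_value_p0[OF ch f] by (simp only:)
  qed
qed

section \<open>The dimension of K\<close>

abbreviation p0_line_chis :: "('a::field vec4 set \<Rightarrow> bit) set" where
  "p0_line_chis \<equiv> range (\<lambda>i. chi (p0_line i))"

lemma span_p0_lines_in_kernel:
  "module.span fscale p0_line_chis \<subseteq> (ker_restr_P1 \<inter> code_PL :: ('a::field vec4 set \<Rightarrow> bit) set)"
proof (rule fscale_span_subset)
  have code_closed: "x + y \<in> code_PL" if "x \<in> code_PL" "y \<in> code_PL" for x y :: "'a vec4 set \<Rightarrow> bit"
    using that unfolding code_PL_def by (rule module.span_add[OF fscale_module])
  have "(0 :: 'a vec4 set \<Rightarrow> bit) \<in> code_PL"
    unfolding code_PL_def by (rule module.span_zero[OF fscale_module])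
  then show "(0 :: 'a vec4 set \<Rightarrow> bit) \<in> ker_restr_P1 \<inter> code_PL" by (simp add: ker_restr_P1_def)
  show "\<forall>x\<in>ker_restr_P1 \<inter> code_PL. \<forall>y\<in>ker_restr_P1 \<inter> code_PL. x + y \<in> (ker_restr_P1 \<inter> code_PL :: ('a vec4 set \<Rightarrow> bit) set)"
    using code_closed by (simp add: ker_restr_P1_def)
  have "chi (p0_line i) \<in> (code_PL :: ('a vec4 set \<Rightarrow> bit) set)" for i
    unfolding code_PL_def by (rule module.span_base[OF fscale_module]) (simp add: p0_line_in_Lines)
  then show "p0_line_chis \<subseteq> (ker_restr_P1 \<inter> code_PL :: ('a vec4 set \<Rightarrow> bit) set)"
    using chi_p0_line_kernel by blast
qed

lemma kernel_in_span_p0_lines: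
  assumes ch: "(1::'a::{field,finite}) + 1 = 0"
  shows "(ker_restr_P1 \<inter> code_PL :: ('a vec4 set \<Rightarrow> bit) set) \<subseteq> module.span fscale p0_line_chis"
proof
  fix f :: "'a vec4 set \<Rightarrow> bit" assume f: "f \<in> ker_restr_P1 \<inter> code_PL"
  have "f = (\<lambda>p. \<Sum>i\<in>UNIV. f (span1 (p0_dir i)) * chi (p0_line i) p)"
    by (rule ext) (rule kernel_expansion[OF ch f])
  also have "\<dots> = (\<Sum>i\<in>UNIV. fscale (f (span1 (p0_dir i))) (chi (p0_line i)))"
    by (simp add: fun_eq_iff fscale_def sum_fun_apply)
  also have "\<dots> \<in> module.span fscale p0_line_chis"
    by (intro module.span_sum[OF fscale_module] module.span_scale[OF fscale_module]
        module.span_base[OF fscale_module]) simp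
  finally show "f \<in> module.span fscale p0_line_chis" .
qed

text \<open>The characteristic functions of the lines through p0 are independent: chi of the i-th
  line is the only one not vanishing at the i-th direction point.\<close>
lemma p0_lines_independent:
  "\<not> module.dependent fscale (p0_line_chis :: ('a::field vec4 set \<Rightarrow> bit) set)"
proof
  assume "module.dependent fscale (p0_line_chis :: ('a vec4 set \<Rightarrow> bit) set)"
  then obtain i :: "'a option" where
    i: "chi (p0_line i) \<in> module.span fscale (p0_line_chis - {chi (p0_line i)})"
    unfolding vector_space.dependent_def[OF fscale_vector_space] by blast
  have "module.span fscale (p0_line_chis - {chi (p0_line i)}) \<subseteq> {h. h (span1 (p0_dir i)) = 0}"
    by (rule fscale_span_subset) (auto simp: chi_p0_line_dir)
  with i show False by (auto simp: chi_p0_line_dir)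
qed

lemma inj_p0_line_chis: "inj (\<lambda>i::'a::field option. chi (p0_line i))"
proof (rule injI)
  fix i j :: "'a option" assume "chi (p0_line i) = chi (p0_line j)"
  then have "chi (p0_line i) (span1 (p0_dir i)) = chi (p0_line j) (span1 (p0_dir i))" by simp
  then show "i = j" by (simp add: chi_p0_line_dir split: if_splits)
qed

theorem corollary12:
  fixes t :: nat
  assumes "card (UNIV :: 'a::{field,finite} set) = 2 ^ t"
  shows "vector_space.dim fscale (ker_restr_P1 \<inter> code_PL :: ('a vec4 set \<Rightarrow> bit) set)
           = 2 ^ t + 1"
proof -
  have "card {0::'a, 1} \<le> card (UNIV :: 'a set)" by (rule card_mono) simp_all
  then have "even (card (UNIV :: 'a set))" using assms by (cases t) simp_all
  then have ch: "(1::'a) + 1 = 0" by (rule card_even_char2)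
  have K: "(ker_restr_P1 \<inter> code_PL :: ('a vec4 set \<Rightarrow> bit) set) = module.span fscale p0_line_chis"
    using span_p0_lines_in_kernel kernel_in_span_p0_lines[OF ch] by blast
  have "vector_space.dim fscale (module.span fscale (p0_line_chis :: ('a vec4 set \<Rightarrow> bit) set))
      = card (p0_line_chis :: ('a vec4 set \<Rightarrow> bit) set)"
    by (rule vector_space.dim_span_eq_card_independent[OF fscale_vector_space p0_lines_independent])
  also have "\<dots> = card (UNIV :: 'a option set)"
    by (rule card_image[OF inj_on_subset[OF inj_p0_line_chis subset_UNIV]])
  also have "\<dots> = 2 ^ t + 1" using assms by (simp add: UNIV_option_conv card_image)
  finally show ?thesis unfolding K .
qed

end
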